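(* Let $d\geq 2$ and let $U=(u_{ij})\in\mathcal{U}_d(\mathbb{C})$ be such that there exists $M\in\mathbb{N}$ for which $(P_U^TP_U)^M$ has all entries non-zero. Let $\mathcal{F}_A=\mathcal{DU}_d(\mathbb{C})$ and $\mathcal{F}_B=\{U^\dagger DU: D\in\mathcal{DU}_d(\mathbb{C})\}$. Then every unitary matrix $V\in\mathcal{U}_d(\mathbb{C})$ can be written as a finite product of matrices each belonging to $\mathcal{F}_A$ or to $\mathcal{F}_B$.
   Context: $\mathcal{U}_d(\mathbb{C})$ denotes the group of $d\times d$ unitary matrices and $\mathcal{DU}_d(\mathbb{C})$ its subgroup of diagonal unitary matrices. $P_U=(p_{ij})$ is the $0/1$ matrix with $p_{ij}=0$ if $u_{ij}=0$ and $p_{ij}=1$ if $u_{ij}\neq 0$. *)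

theory Defs
  imports "HOL-Analysis.Analysis"
begin

definition ctrans :: "complex ^'n ^'m \<Rightarrow> complex ^'m ^'n" where
  "ctrans A = (\<chi> i j. cnj (A $ j $ i))"

definition unitary :: "complex ^'n ^'n \<Rightarrow> bool" where
  "unitary U \<longleftrightarrow> ctrans U ** U = mat 1 \<and> U ** ctrans U = mat 1"

definition diag_unitary :: "complex ^'n ^'n \<Rightarrow> bool" where
  "diag_unitary D \<longleftrightarrow> unitary D \<and> (\<forall>i j. i \<noteq> j \<longrightarrow> D $ i $ j = 0)"

definition pattern :: "complex ^'n ^'m \<Rightarrow> nat ^'n ^'m" where
  "pattern U = (\<chi> i j. if U $ i $ j = 0 then 0 else 1)"

primrec matpow :: "'a::semiring_1 ^'n ^'n \<Rightarrow> nat \<Rightarrow> 'a ^'n ^'n" where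
  "matpow A 0 = mat 1"
| "matpow A (Suc k) = A ** matpow A k"

definition list_matprod :: "(complex ^'n ^'n) list \<Rightarrow> complex ^'n ^'n" where
  "list_matprod Ms = foldr (**) Ms (mat 1)"

end

theory Submission
  imports Defs
begin

text \<open>
  Let \<open>G\<close> be the group generated by the two families. For every conjugate \<open>P = gQg\<^sup>\<dagger>\<close>,
  \<open>g \<in> G\<close>, of a rank-one projection \<open>Q = E\<^sub>j\<^sub>j\<close> or \<open>Q = U\<^sup>\<dagger>E\<^sub>j\<^sub>jU\<close>, the phase matrices
  \<open>1 + (z - 1)P\<close>, \<open>|z| = 1\<close>, lie in \<open>G\<close>. The real span \<open>L\<close> of these projections is closed
  under \<open>X \<mapsto> \<i>[P, X]\<close>, because \<open>\<i>[P, X]\<close> is a real combination of conjugates of \<open>X\<close>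
  by such phase matrices; hence \<open>L\<close> is closed under \<open>\<i>[Y, X]\<close>.
  The projection \<open>U\<^sup>\<dagger>E\<^sub>i\<^sub>iU\<close> has a nonzero \<open>(j, k)\<close> entry whenever row \<open>i\<close> of \<open>U\<close>
  is nonzero in the columns \<open>j\<close> and \<open>k\<close>, and brackets propagate nonzero entries along
  paths of the graph with adjacency matrix \<open>P\<^sub>U\<^sup>TP\<^sub>U\<close>. This graph is connected by hypothesis,
  so \<open>L\<close> contains every Hermitian matrix. Then products of phase matrices have surjective
  derivative onto the tangent space of the unitary group at \<open>1\<close>, and the open mapping
  theorem shows that \<open>G\<close> contains a neighbourhood of \<open>1\<close> in the unitary group. Taking roots
  of phases, \<open>G\<close> contains every Householder reflection, and Householder reduction of the
  columns writes every unitary matrix as a product of elements of \<open>G\<close>.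
\<close>

definition scaleC_mat :: "complex \<Rightarrow> complex^'n^'m \<Rightarrow> complex^'n^'m" where
  "scaleC_mat c A = (\<chi> i j. c * A $ i $ j)"

definition mat_unit :: "'n \<Rightarrow> 'n \<Rightarrow> complex^'n^'n" where
  "mat_unit j k = (\<chi> a b. if a = j \<and> b = k then 1 else 0)"

definition diag_mat :: "('n \<Rightarrow> complex) \<Rightarrow> complex^'n^'n" where
  "diag_mat f = (\<chi> i j. if i = j then f i else 0)"

definition hermitian :: "complex^'n^'n \<Rightarrow> bool" where
  "hermitian A \<longleftrightarrow> ctrans A = A"

lemma cnj_mult_self_unit: "cmod z = 1 \<Longrightarrow> cnj z * z = 1"
  by (metis complex_norm_square mult.commute of_real_1 power_one)

lemma exists_unit_phase: "\<exists>\<mu>. cmod \<mu> = 1 \<and> cnj \<mu> * z = of_real (cmod z)"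
proof (cases "z = 0")
  case True
  then show ?thesis by (intro exI[of _ 1]) simp
next
  case False
  have "cnj (sgn z) * z = cnj z * z / of_real (cmod z)"
    by (simp add: sgn_eq)
  also have "\<dots> = (of_real (cmod z))\<^sup>2 / of_real (cmod z)"
    using complex_norm_square[of z] by (simp add: mult.commute)
  also have "\<dots> = of_real (cmod z)"
    using False by (simp add: power2_eq_square)
  finally show ?thesis
    using False by (intro exI[of _ "sgn z"]) (simp add: norm_sgn)
qed

lemma span_range_eq_sums:
  fixes P :: "'i::finite \<Rightarrow> 'a::real_vector"
  shows "span (range P) = range (\<lambda>h :: real^'i. \<Sum>i\<in>UNIV. h $ i *\<^sub>R P i)"
proof (rule span_subspace)
  show "range P \<subseteq> range (\<lambda>h :: real^'i. \<Sum>i\<in>UNIV. h $ i *\<^sub>R P i)"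
  proof
    fix x assume "x \<in> range P"
    then obtain j where "x = P j" by blast
    moreover have "(\<Sum>i\<in>UNIV. axis j 1 $ i *\<^sub>R P i) = (\<Sum>i\<in>UNIV. if i = j then P j else 0)"
      by (rule sum.cong) (auto simp: axis_def)
    ultimately have "x = (\<Sum>i\<in>UNIV. axis j 1 $ i *\<^sub>R P i)"
      by simp
    then show "x \<in> range (\<lambda>h :: real^'i. \<Sum>i\<in>UNIV. h $ i *\<^sub>R P i)" by blast
  qed
  show "range (\<lambda>h :: real^'i. \<Sum>i\<in>UNIV. h $ i *\<^sub>R P i) \<subseteq> span (range P)"
    by (auto intro!: span_sum span_scale simp: span_base)
  have "linear (\<lambda>h :: real^'i. \<Sum>i\<in>UNIV. h $ i *\<^sub>R P i)"
    by (rule linearI) (simp_all add: sum.distrib scaleR_add_left scaleR_sum_right)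
  then show "subspace (range (\<lambda>h :: real^'i. \<Sum>i\<in>UNIV. h $ i *\<^sub>R P i))"
    by (rule linear_subspace_image[OF _ subspace_UNIV])
qed

lemma exists_spanning_family:
  fixes S :: "'a::euclidean_space set"
  assumes "S \<noteq> {}" and "DIM('a) \<le> CARD('i::finite)"
  shows "\<exists>P :: 'i \<Rightarrow> 'a. range P \<subseteq> S \<and> S \<subseteq> span (range P)"
proof -
  obtain B where B: "B \<subseteq> S" "independent B" "S \<subseteq> span B"
    using maximal_independent_subset[of S] by blast
  then have "finite B" "card B \<le> CARD('i)"
    using independent_bound[OF B(2)] assms(2) by auto
  then obtain f :: "'a \<Rightarrow> 'i" where f: "inj_on f B"
    using card_le_inj[of B "UNIV :: 'i set"] by auto
  obtain s where "s \<in> S"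
    using assms(1) by blast
  define P where "P i = (if i \<in> f ` B then inv_into B f i else s)" for i
  have "range P \<subseteq> S"
    using B(1) \<open>s \<in> S\<close> by (auto simp: P_def inv_into_into)
  moreover have "B \<subseteq> range P"
  proof
    fix b assume "b \<in> B"
    then have "P (f b) = b" using f by (simp add: P_def)
    then show "b \<in> range P" by (metis rangeI)
  qed
  ultimately show ?thesis
    using B(3) span_mono by blast
qed

lemma matrix_mult_nth: "(A ** B) $ i $ j = (\<Sum>k\<in>UNIV. A $ i $ k * B $ k $ j)"
  by (simp add: matrix_matrix_mult_def)

lemma matrix_vector_mult_nth: "(A *v x) $ i = (\<Sum>k\<in>UNIV. A $ i $ k * x $ k)"
  by (simp add: matrix_vector_mult_def)

lemma mat_nth: "mat c $ i $ j = (if i = j then c else 0)"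
  by (simp add: mat_def)

lemma ctrans_nth [simp]: "ctrans A $ i $ j = cnj (A $ j $ i)"
  by (simp add: ctrans_def)

lemma scaleC_mat_nth [simp]: "scaleC_mat c A $ i $ j = c * A $ i $ j"
  by (simp add: scaleC_mat_def)

lemma mat_unit_nth [simp]: "mat_unit j k $ a $ b = (if a = j \<and> b = k then 1 else 0)"
  by (simp add: mat_unit_def)

lemma ctrans_ctrans [simp]: "ctrans (ctrans A) = A"
  by (simp add: vec_eq_iff)

lemma ctrans_mult: "ctrans (A ** B) = ctrans B ** ctrans A"
  by (simp add: vec_eq_iff matrix_mult_nth mult.commute)

lemma ctrans_add: "ctrans (A + B) = ctrans A + ctrans B"
  by (simp add: vec_eq_iff)

lemma ctrans_diff: "ctrans (A - B) = ctrans A - ctrans B"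
  by (simp add: vec_eq_iff)

lemma ctrans_mat_1 [simp]: "ctrans (mat 1 :: complex^'n^'n) = mat 1"
  by (simp add: vec_eq_iff mat_nth)

lemma ctrans_zero [simp]: "ctrans 0 = 0"
  by (simp add: vec_eq_iff)

lemma ctrans_scaleC_mat: "ctrans (scaleC_mat c A) = scaleC_mat (cnj c) (ctrans A)"
  by (simp add: vec_eq_iff)

lemma ctrans_scaleR: "ctrans (r *\<^sub>R A) = r *\<^sub>R ctrans A"
  by (simp add: vec_eq_iff)

lemma scaleC_mat_mult_left: "scaleC_mat c A ** B = scaleC_mat c (A ** B)"
  by (simp add: vec_eq_iff matrix_mult_nth sum_distrib_left mult.assoc)

lemma scaleC_mat_mult_right: "A ** scaleC_mat c B = scaleC_mat c (A ** B)"
  by (simp add: vec_eq_iff matrix_mult_nth sum_distrib_left algebra_simps)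

lemma scaleC_mat_add_right: "scaleC_mat c (A + B) = scaleC_mat c A + scaleC_mat c B"
  by (simp add: vec_eq_iff algebra_simps)

lemma scaleC_mat_diff_right: "scaleC_mat c (A - B) = scaleC_mat c A - scaleC_mat c B"
  by (simp add: vec_eq_iff algebra_simps)

lemma scaleC_mat_add_left: "scaleC_mat (c + d) A = scaleC_mat c A + scaleC_mat d A"
  by (simp add: vec_eq_iff algebra_simps)

lemma scaleC_mat_scaleC_mat: "scaleC_mat c (scaleC_mat d A) = scaleC_mat (c * d) A"
  by (simp add: vec_eq_iff algebra_simps)

lemma scaleC_mat_zero_left [simp]: "scaleC_mat 0 A = 0"
  by (simp add: vec_eq_iff)

lemma scaleC_mat_zero_right [simp]: "scaleC_mat c 0 = 0"
  by (simp add: vec_eq_iff)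

lemma scaleC_mat_of_real: "scaleC_mat (of_real r) A = r *\<^sub>R A"
  unfolding vec_eq_iff by (auto simp: scaleR_conv_of_real[where 'a=complex])

lemma scaleC_mat_sum: "scaleC_mat c (sum f S) = (\<Sum>x\<in>S. scaleC_mat c (f x))"
  by (simp add: vec_eq_iff sum_distrib_left)

lemma bounded_linear_scaleC_mat_left: "bounded_linear (\<lambda>c. scaleC_mat c A)"
  by (auto intro!: linearI simp: linear_conv_bounded_linear[symmetric] scaleC_mat_add_left
      scaleC_mat_of_real[symmetric] scaleC_mat_scaleC_mat scaleR_conv_of_real)

lemma matrix_add_rdistrib: "(A + B) ** C = A ** C + B ** (C :: 'a::semiring_1^'k^'n)"
  by (simp add: vec_eq_iff matrix_mult_nth algebra_simps sum.distrib)

lemma matrix_diff_ldistrib: "A ** (B - C) = A ** B - A ** (C :: 'a::ring_1^'k^'n)"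
  by (simp add: vec_eq_iff matrix_mult_nth algebra_simps sum_subtractf)

lemma matrix_diff_rdistrib: "(A - B) ** C = A ** C - B ** (C :: 'a::ring_1^'k^'n)"
  by (simp add: vec_eq_iff matrix_mult_nth algebra_simps sum_subtractf)

lemma bounded_bilinear_matrix_mult:
  "bounded_bilinear ((**) :: complex^'n^'m \<Rightarrow> complex^'k^'n \<Rightarrow> complex^'k^'m)"
  unfolding bilinear_conv_bounded_bilinear[symmetric] bilinear_def
  by (auto intro!: linearI simp: matrix_add_ldistrib matrix_add_rdistrib
      scalar_matrix_assoc matrix_scalar_ac)

lemma diag_mat_mult_left: "(diag_mat f ** X) $ i $ j = f i * X $ i $ j"
  by (simp add: matrix_mult_nth diag_mat_def if_distrib if_distribR cong: if_cong)

lemma mat_unit_mult_left: "(mat_unit j k ** X) $ a $ b = (if a = j then X $ k $ b else 0)"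
  by (simp add: matrix_mult_nth if_distrib if_distribR cong: if_cong)

lemma mat_unit_mult_right: "(X ** mat_unit j k) $ a $ b = (if b = k then X $ a $ j else 0)"
  by (simp add: matrix_mult_nth if_distrib if_distribR cong: if_cong)

lemma unitary_mult: "unitary A \<Longrightarrow> unitary B \<Longrightarrow> unitary (A ** B)"
  unfolding unitary_def ctrans_mult by (metis matrix_mul_assoc matrix_mul_lid)

lemma unitary_ctrans: "unitary A \<Longrightarrow> unitary (ctrans A)"
  by (simp add: unitary_def)

lemma unitary_mat_1 [simp]: "unitary (mat 1)"
  by (simp add: unitary_def)

lemma unitaryD: "unitary A \<Longrightarrow> ctrans A ** A = mat 1" "unitary A \<Longrightarrow> A ** ctrans A = mat 1"
  by (auto simp: unitary_def)

lemma ctrans_diag_mat: "ctrans (diag_mat f) = diag_mat (\<lambda>i. cnj (f i))"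
  by (simp add: vec_eq_iff diag_mat_def)

lemma diag_unitary_diag_mat: "(\<And>i. cmod (f i) = 1) \<Longrightarrow> diag_unitary (diag_mat f)"
  unfolding diag_unitary_def unitary_def ctrans_diag_mat
  by (auto simp: vec_eq_iff diag_mat_mult_left mat_nth)
     (auto simp: diag_mat_def cnj_mult_self_unit mult.commute[of "f _"])

lemma list_matprod_Nil [simp]: "list_matprod [] = mat 1"
  by (simp add: list_matprod_def)

lemma list_matprod_Cons [simp]: "list_matprod (X # Ms) = X ** list_matprod Ms"
  by (simp add: list_matprod_def)

lemma list_matprod_append: "list_matprod (Ms @ Ns) = list_matprod Ms ** list_matprod Ns"
  by (induction Ms) (simp_all add: matrix_mul_assoc)

lemma ctrans_list_matprod: "ctrans (list_matprod Ms) = list_matprod (rev (map ctrans Ms))"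
  by (induction Ms) (simp_all add: list_matprod_append ctrans_mult)

subsection \<open>The generated group and its phase matrices\<close>

definition generator :: "complex^'d^'d \<Rightarrow> complex^'d^'d \<Rightarrow> bool" where
  "generator U X \<longleftrightarrow> diag_unitary X \<or> (\<exists>D. diag_unitary D \<and> X = ctrans U ** D ** U)"

definition generated :: "complex^'d^'d \<Rightarrow> complex^'d^'d \<Rightarrow> bool" where
  "generated U V \<longleftrightarrow> (\<exists>Ms. (\<forall>X\<in>set Ms. generator U X) \<and> V = list_matprod Ms)"

lemma generated_mat_1: "generated U (mat 1)"
  unfolding generated_def by (rule exI[of _ "[]"]) simp

lemma generated_generator: "generator U X \<Longrightarrow> generated U X"
  unfolding generated_def by (rule exI[of _ "[X]"]) simp

lemma generated_mult: "generated U A \<Longrightarrow> generated U B \<Longrightarrow> generated U (A ** B)"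
  unfolding generated_def by (metis Un_iff list_matprod_append set_append)

lemma generated_list_matprod: "(\<And>X. X \<in> set Ms \<Longrightarrow> generated U X) \<Longrightarrow> generated U (list_matprod Ms)"
  by (induction Ms) (auto intro: generated_mat_1 generated_mult)

lemma diag_unitary_ctrans: "diag_unitary D \<Longrightarrow> diag_unitary (ctrans D)"
  unfolding diag_unitary_def by (auto simp: unitary_ctrans)

lemma generator_ctrans: "generator U X \<Longrightarrow> generator U (ctrans X)"
  unfolding generator_def
  by (metis ctrans_ctrans ctrans_mult diag_unitary_ctrans matrix_mul_assoc)

lemma generated_ctrans:
  assumes "generated U A"
  shows "generated U (ctrans A)"
proof -
  obtain Ms where "\<forall>X\<in>set Ms. generator U X" "A = list_matprod Ms"
    using assms unfolding generated_def by blast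
  then show ?thesis
    unfolding generated_def
    by (intro exI[of _ "rev (map ctrans Ms)"]) (auto simp: ctrans_list_matprod generator_ctrans)
qed

lemma generated_unitary:
  assumes "unitary U" "generated U A"
  shows "unitary A"
proof -
  have "unitary X" if "generator U X" for X
    using that assms(1) unfolding generator_def diag_unitary_def
    by (auto intro!: unitary_mult unitary_ctrans)
  moreover obtain Ms where "\<forall>X\<in>set Ms. generator U X" "A = list_matprod Ms"
    using assms(2) unfolding generated_def by blast
  ultimately show ?thesis
    by (induction Ms arbitrary: A) (auto intro: unitary_mult)
qed

text \<open>For an orthogonal projection \<open>P\<close>, \<open>phase_mat P z\<close> multiplies the range of \<open>P\<close> by \<open>z\<close>
  and fixes its orthogonal complement.\<close>

definition phase_mat :: "complex^'n^'n \<Rightarrow> complex \<Rightarrow> complex^'n^'n" where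
  "phase_mat P z = mat 1 + scaleC_mat (z - 1) P"

lemma phase_mat_1 [simp]: "phase_mat P 1 = mat 1"
  by (simp add: phase_mat_def)

lemma phase_mat_conj:
  "unitary g \<Longrightarrow> g ** phase_mat P z ** ctrans g = phase_mat (g ** P ** ctrans g) z"
  unfolding phase_mat_def
  by (simp add: matrix_add_ldistrib matrix_add_rdistrib scaleC_mat_mult_left
      scaleC_mat_mult_right unitaryD)

lemma phase_mat_mat_unit: "phase_mat (mat_unit j j) z = diag_mat (\<lambda>i. if i = j then z else 1)"
  by (auto simp: phase_mat_def vec_eq_iff diag_mat_def mat_nth)

lemma phase_mat_mult: "P ** P = P \<Longrightarrow> phase_mat P z ** phase_mat P w = phase_mat P (z * w)"
  unfolding phase_mat_def
  by (simp add: matrix_add_ldistrib matrix_add_rdistrib scaleC_mat_mult_left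
      scaleC_mat_mult_right scaleC_mat_scaleC_mat) (simp add: vec_eq_iff algebra_simps)

lemma ctrans_phase_mat: "hermitian P \<Longrightarrow> ctrans (phase_mat P z) = phase_mat P (cnj z)"
  by (simp add: hermitian_def phase_mat_def ctrans_add ctrans_scaleC_mat)

lemma unitary_phase_mat:
  assumes "hermitian P" "P ** P = P" "cmod z = 1"
  shows "unitary (phase_mat P z)"
  unfolding unitary_def ctrans_phase_mat[OF assms(1)] phase_mat_mult[OF assms(2)]
  using cnj_mult_self_unit[OF assms(3)] by (simp add: mult.commute)

lemma list_matprod_replicate_phase_mat:
  "P ** P = P \<Longrightarrow> list_matprod (replicate n (phase_mat P z)) = phase_mat P (z ^ n)"
  by (induction n) (simp_all add: phase_mat_mult)

lemma phase_mat_sandwich: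
  "phase_mat P z ** X ** phase_mat P w =
     X + scaleC_mat (z - 1) (P ** X) + scaleC_mat (w - 1) (X ** P)
       + scaleC_mat ((z - 1) * (w - 1)) (P ** X ** P)"
  unfolding phase_mat_def
  by (simp add: matrix_add_ldistrib matrix_add_rdistrib scaleC_mat_mult_left
      scaleC_mat_mult_right scaleC_mat_scaleC_mat scaleC_mat_add_right mult.commute)

lemma generated_phase_mat_unit: "cmod z = 1 \<Longrightarrow> generated U (phase_mat (mat_unit j j) z)"
  unfolding phase_mat_mat_unit
  by (intro generated_generator) (auto simp: generator_def intro: diag_unitary_diag_mat)

lemma generated_phase_mat_conj_unit:
  assumes "unitary U" "cmod z = 1"
  shows "generated U (phase_mat (ctrans U ** mat_unit j j ** U) z)"
proof -
  have "phase_mat (ctrans U ** mat_unit j j ** U) z = ctrans U ** phase_mat (mat_unit j j) z ** U"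
    using phase_mat_conj[OF unitary_ctrans[OF assms(1)]] by simp
  moreover have "diag_unitary (diag_mat (\<lambda>i. if i = j then z else 1))"
    using assms(2) by (intro diag_unitary_diag_mat) simp
  ultimately show ?thesis
    unfolding phase_mat_mat_unit by (metis generator_def generated_generator)
qed

subsection \<open>The real span of the conjugated rank-one projections\<close>

definition conj_projections :: "complex^'d^'d \<Rightarrow> (complex^'d^'d) set" where
  "conj_projections U = {g ** P ** ctrans g | g P. generated U g \<and>
     (\<exists>j. P = mat_unit j j \<or> P = ctrans U ** mat_unit j j ** U)}"

lemma mat_unit_in_conj_projections: "mat_unit j j \<in> conj_projections U"
  unfolding conj_projections_def using generated_mat_1[of U] by force

lemma conj_unit_in_conj_projections: "ctrans U ** mat_unit j j ** U \<in> conj_projections U"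
  unfolding conj_projections_def using generated_mat_1[of U] by force

lemma hermitian_mat_unit: "hermitian (mat_unit j j)"
  by (auto simp: hermitian_def vec_eq_iff)

lemma hermitian_conj: "hermitian Q \<Longrightarrow> hermitian (g ** Q ** ctrans g)"
  by (simp add: hermitian_def ctrans_mult matrix_mul_assoc)

lemma hermitian_conj_projections: "P \<in> conj_projections U \<Longrightarrow> hermitian P"
  unfolding conj_projections_def
  using hermitian_conj hermitian_conj[OF hermitian_mat_unit, of "ctrans U"] hermitian_mat_unit
  by auto

lemma generated_phase_mat_conj_projections:
  assumes U: "unitary U" and P: "P \<in> conj_projections U" and z: "cmod z = 1"
  shows "generated U (phase_mat P z)"
proof -
  obtain g Q j where g: "generated U g" and P_eq: "P = g ** Q ** ctrans g"
    and Q: "Q = mat_unit j j \<or> Q = ctrans U ** mat_unit j j ** U"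
    using P unfolding conj_projections_def by blast
  have "generated U (phase_mat Q z)"
    using Q generated_phase_mat_unit[OF z] generated_phase_mat_conj_unit[OF U z] by blast
  moreover have "phase_mat P z = g ** phase_mat Q z ** ctrans g"
    using phase_mat_conj[OF generated_unitary[OF U g]] P_eq by simp
  ultimately show ?thesis
    using g by (simp add: generated_mult generated_ctrans)
qed

lemma conj_span_conj_projections:
  assumes g: "generated U g" and X: "X \<in> span (conj_projections U)"
  shows "g ** X ** ctrans g \<in> span (conj_projections U)"
proof -
  let ?S = "conj_projections U" and ?f = "\<lambda>X. g ** X ** ctrans g"
  have "linear ?f"
    by (rule linearI) (simp_all add: matrix_add_ldistrib matrix_add_rdistrib
        scalar_matrix_assoc matrix_scalar_ac)
  moreover have "?f ` ?S \<subseteq> ?S"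
  proof
    fix Y assume "Y \<in> ?f ` ?S"
    then obtain h P j where "Y = g ** (h ** P ** ctrans h) ** ctrans g" and h: "generated U h"
      and P: "P = mat_unit j j \<or> P = ctrans U ** mat_unit j j ** U"
      unfolding conj_projections_def by blast
    then have "Y = (g ** h) ** P ** ctrans (g ** h)"
      by (simp add: ctrans_mult matrix_mul_assoc)
    then show "Y \<in> ?S"
      unfolding conj_projections_def using generated_mult[OF g h] P by blast
  qed
  ultimately have "?f ` span ?S \<subseteq> span ?S"
    by (metis span_linear_image span_mono)
  then show ?thesis using X by blast
qed

lemma hermitian_span_conj_projections: "X \<in> span (conj_projections U) \<Longrightarrow> hermitian X"
  by (induction rule: span_induct)
    (auto simp: subspace_def hermitian_def ctrans_add ctrans_scaleR
      hermitian_conj_projections[unfolded hermitian_def])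

definition ibracket :: "complex^'n^'n \<Rightarrow> complex^'n^'n \<Rightarrow> complex^'n^'n" where
  "ibracket Y X = scaleC_mat \<i> (Y ** X - X ** Y)"

lemma ibracket_nth: "ibracket Y X $ a $ b = \<i> * ((Y ** X) $ a $ b - (X ** Y) $ a $ b)"
  by (simp add: ibracket_def)

text \<open>For a Hermitian projection \<open>P\<close>, \<open>phase_mat P (-\<i>)\<close> is the inverse of \<open>phase_mat P \<i>\<close>
  and \<open>phase_mat P (-1)\<close> is an involution, so both products on the right are conjugates of \<open>X\<close>:
  this is how the group reaches the brackets of its Lie algebra.\<close>

lemma ibracket_eq_phase_mat_sandwiches:
  "ibracket P X = (phase_mat P \<i> ** X ** phase_mat P (-\<i>) - X)
     - (1/2) *\<^sub>R (phase_mat P (-1) ** X ** phase_mat P (-1) - X)"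
  unfolding phase_mat_sandwich ibracket_def scaleC_mat_of_real[symmetric]
  by (simp add: vec_eq_iff algebra_simps)

lemma ibracket_zero_left [simp]: "ibracket 0 X = 0"
  by (simp add: ibracket_def)

lemma ibracket_add_left: "ibracket (A + B) X = ibracket A X + ibracket B X"
  by (simp add: ibracket_def matrix_add_ldistrib matrix_add_rdistrib
      scaleC_mat_add_right[symmetric] algebra_simps)

lemma ibracket_scaleR_left: "ibracket (r *\<^sub>R A) X = r *\<^sub>R ibracket A X"
  unfolding ibracket_def scalar_matrix_assoc[symmetric] matrix_scalar_ac
    scaleC_mat_of_real[symmetric] scaleC_mat_mult_left scaleC_mat_mult_right
    scaleC_mat_diff_right[symmetric] scaleC_mat_scaleC_mat
  by (simp add: mult.commute)

lemma ibracket_conj_projection_in_span: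
  assumes U: "unitary U" and P: "P \<in> conj_projections U" and X: "X \<in> span (conj_projections U)"
  shows "ibracket P X \<in> span (conj_projections U)"
proof -
  note herm = hermitian_conj_projections[OF P]
  have "phase_mat P z ** X ** ctrans (phase_mat P z) \<in> span (conj_projections U)"
    if "cmod z = 1" for z
    using conj_span_conj_projections[OF generated_phase_mat_conj_projections[OF U P that] X] .
  from this[of \<i>] this[of "-1"]
  have "phase_mat P \<i> ** X ** phase_mat P (-\<i>) \<in> span (conj_projections U)"
    and "phase_mat P (-1) ** X ** phase_mat P (-1) \<in> span (conj_projections U)"
    by (simp_all add: ctrans_phase_mat[OF herm])
  then show ?thesis
    unfolding ibracket_eq_phase_mat_sandwiches by (intro span_diff span_scale X)
qed

lemma ibracket_in_span:
  assumes U: "unitary U"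
    and Y: "Y \<in> span (conj_projections U)" and X: "X \<in> span (conj_projections U)"
  shows "ibracket Y X \<in> span (conj_projections U)"
  using Y
proof (induction rule: span_induct)
  case (step P)
  show ?case using ibracket_conj_projection_in_span[OF U step X] .
next
  case base
  show ?case
    unfolding subspace_def
    by (auto simp: ibracket_add_left ibracket_scaleR_left span_add span_scale span_zero)
qed

definition herm_pair :: "'n \<Rightarrow> 'n \<Rightarrow> complex \<Rightarrow> complex^'n^'n" where
  "herm_pair j k z = scaleC_mat z (mat_unit j k) + scaleC_mat (cnj z) (mat_unit k j)"

definition linked :: "complex^'d^'d \<Rightarrow> 'd \<Rightarrow> 'd \<Rightarrow> bool" where
  "linked U j k \<longleftrightarrow> j \<noteq> k \<and> (\<exists>X\<in>span (conj_projections U). X $ j $ k \<noteq> 0)"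

lemma herm_pair_nth:
  "herm_pair j k z $ a $ b = (if a = j \<and> b = k then z else 0) + (if a = k \<and> b = j then cnj z else 0)"
  unfolding herm_pair_def vector_add_component scaleC_mat_nth mat_unit_nth
  by (simp only: if_distrib[of "\<lambda>x. _ * x"] mult_1_right mult_zero_right)

lemma herm_pair_add: "herm_pair j k (z + w) = herm_pair j k z + herm_pair j k w"
  by (simp add: herm_pair_def scaleC_mat_add_left algebra_simps)

lemma herm_pair_of_real_mult: "herm_pair j k (of_real r * z) = r *\<^sub>R herm_pair j k z"
  by (simp add: herm_pair_def scaleC_mat_of_real[symmetric] scaleC_mat_scaleC_mat
      scaleC_mat_add_right)

lemma herm_pair_diag: "herm_pair a a z = (2 * Re z) *\<^sub>R mat_unit a a"
  by (simp add: herm_pair_def scaleC_mat_of_real[symmetric] scaleC_mat_add_left[symmetric]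
      complex_add_cnj)

lemma ibracket_ibracket_mat_unit:
  assumes "j \<noteq> k"
  shows "ibracket (mat_unit k k) (ibracket (mat_unit j j) X) =
    scaleC_mat (X $ j $ k) (mat_unit j k) + scaleC_mat (X $ k $ j) (mat_unit k j)" (is "?lhs = ?rhs")
proof (unfold vec_eq_iff, intro allI)
  fix a b
  show "?lhs $ a $ b = ?rhs $ a $ b"
    unfolding ibracket_nth mat_unit_mult_left mat_unit_mult_right
      vector_add_component scaleC_mat_nth mat_unit_nth
    using assms by (cases "a = j"; cases "a = k"; cases "b = j"; cases "b = k"; simp)
qed

lemma ibracket_mat_unit_herm_pair:
  assumes "j \<noteq> k"
  shows "ibracket (mat_unit j j) (herm_pair j k z) = herm_pair j k (\<i> * z)" (is "?lhs = ?rhs")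
proof (unfold vec_eq_iff, intro allI)
  fix a b
  show "?lhs $ a $ b = ?rhs $ a $ b"
    unfolding ibracket_nth herm_pair_nth mat_unit_mult_left mat_unit_mult_right
    using assms by (cases "a = j"; cases "a = k"; cases "b = j"; cases "b = k"; simp)
qed

lemma herm_pair_real_combination:
  assumes "c \<noteq> 0"
  shows "herm_pair j k z = Re (z / c) *\<^sub>R herm_pair j k c + Im (z / c) *\<^sub>R herm_pair j k (\<i> * c)"
proof -
  have "z = (of_real (Re (z / c)) + \<i> * of_real (Im (z / c))) * c"
    using assms by (simp only: complex_eq[of "z / c", symmetric]) simp
  then have "z = of_real (Re (z / c)) * c + of_real (Im (z / c)) * (\<i> * c)"
    by (simp add: algebra_simps)
  then show ?thesis
    by (metis herm_pair_add herm_pair_of_real_mult)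
qed

text \<open>Two brackets with the diagonal units \<open>E\<^sub>j\<^sub>j\<close>, \<open>E\<^sub>k\<^sub>k\<close> cut out the \<open>(j,k)\<close> entry of a
  Hermitian matrix and rotate it by \<open>\<i>\<close>; the two results span all \<open>herm_pair j k z\<close> over \<open>\<real>\<close>.\<close>

lemma herm_pair_in_span_if_linked:
  assumes U: "unitary U" and "linked U j k"
  shows "herm_pair j k z \<in> span (conj_projections U)"
proof -
  let ?L = "span (conj_projections U)"
  obtain X where X: "X \<in> ?L" and jk: "j \<noteq> k" and nonzero: "X $ j $ k \<noteq> 0"
    using assms(2) unfolding linked_def by blast
  define c where "c = X $ j $ k"
  have "X $ k $ j = cnj c"
    using hermitian_span_conj_projections[OF X] unfolding hermitian_def c_def
    by (metis ctrans_nth complex_cnj_cnj)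
  moreover have units: "mat_unit j j \<in> ?L" "mat_unit k k \<in> ?L"
    by (simp_all add: span_base mat_unit_in_conj_projections)
  ultimately have c1: "herm_pair j k c \<in> ?L"
    using ibracket_in_span[OF U units(2) ibracket_in_span[OF U units(1) X]]
    by (simp add: ibracket_ibracket_mat_unit[OF jk] herm_pair_def c_def)
  have ci: "herm_pair j k (\<i> * c) \<in> ?L"
    using ibracket_in_span[OF U units(1) c1] by (simp add: ibracket_mat_unit_herm_pair[OF jk])
  show ?thesis
    using herm_pair_real_combination[of c j k z] nonzero c1 ci unfolding c_def
    by (simp add: span_add span_scale)
qed

lemma linked_trans:
  assumes U: "unitary U" and "linked U j k" "linked U k l" "j \<noteq> l"
  shows "linked U j l"
proof -
  have "j \<noteq> k" "k \<noteq> l" using assms(2,3) unfolding linked_def by auto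
  then have "ibracket (herm_pair j k 1) (herm_pair k l 1) $ j $ l = \<i>"
    unfolding ibracket_nth herm_pair_def matrix_add_rdistrib matrix_add_ldistrib
      vector_add_component scaleC_mat_mult_left scaleC_mat_mult_right scaleC_mat_nth
      mat_unit_mult_left mat_unit_mult_right mat_unit_nth
    using assms(4) by simp
  moreover have "ibracket (herm_pair j k 1) (herm_pair k l 1) \<in> span (conj_projections U)"
    using assms by (intro ibracket_in_span herm_pair_in_span_if_linked)
  ultimately show ?thesis
    using assms(4) unfolding linked_def by force
qed

lemma linked_if_common_row:
  assumes "U $ i $ j \<noteq> 0" "U $ i $ k \<noteq> 0" "j \<noteq> k"
  shows "linked U j k"
proof -
  have "(ctrans U ** mat_unit i i ** U) $ j $ k = cnj (U $ i $ j) * U $ i $ k"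
    by (simp add: matrix_mult_nth[of "ctrans U ** mat_unit i i"] mat_unit_mult_right
        if_distrib if_distribR cong: if_cong)
  then show ?thesis
    unfolding linked_def using assms span_base[OF conj_unit_in_conj_projections, of U i]
    by (intro conjI bexI[of _ "ctrans U ** mat_unit i i ** U"]) auto
qed

lemma common_row_if_pattern_gram_nonzero:
  assumes "(transpose (pattern U) ** pattern U) $ a $ b \<noteq> 0"
  shows "\<exists>i. U $ i $ a \<noteq> 0 \<and> U $ i $ b \<noteq> 0"
  using assms by (auto simp: matrix_mult_nth transpose_def pattern_def split: if_splits)

lemma linked_if_matpow_nonzero:
  assumes U: "unitary U"
  shows "matpow (transpose (pattern U) ** pattern U) M $ a $ b \<noteq> 0 \<Longrightarrow> a = b \<or> linked U a b"
proof (induction M arbitrary: a)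
  case 0
  then show ?case by (simp add: mat_nth split: if_splits)
next
  case (Suc M)
  let ?A = "transpose (pattern U) ** pattern U"
  obtain c where ac: "?A $ a $ c \<noteq> 0" and cb: "matpow ?A M $ c $ b \<noteq> 0"
    using Suc.prems by (auto simp: matrix_mult_nth)
  have "a = c \<or> linked U a c"
    using common_row_if_pattern_gram_nonzero[OF ac] linked_if_common_row by blast
  moreover have "c = b \<or> linked U c b"
    using Suc.IH[OF cb] .
  ultimately show ?case
    using linked_trans[OF U] by blast
qed

lemma sum_mat_units: "(\<Sum>a\<in>UNIV. \<Sum>b\<in>UNIV. scaleC_mat (A $ a $ b) (mat_unit a b)) = A"
proof -
  have row: "(\<Sum>b\<in>UNIV. A $ a $ b * (if x = a \<and> y = b then 1 else 0)) = (if a = x then A $ a $ y else 0)"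
    for a x y
    by (cases "a = x") (simp_all add: if_distrib[of "\<lambda>u. _ * u"] cong: if_cong)
  show ?thesis
    by (simp add: vec_eq_iff sum_component row)
qed

lemma hermitian_eq_sum_herm_pairs:
  assumes "hermitian A"
  shows "A = (1/2) *\<^sub>R (\<Sum>a\<in>UNIV. \<Sum>b\<in>UNIV. herm_pair a b (A $ a $ b))"
proof -
  have "(\<Sum>a\<in>UNIV. \<Sum>b\<in>UNIV. scaleC_mat (cnj (A $ a $ b)) (mat_unit b a)) =
      (\<Sum>b\<in>UNIV. \<Sum>a\<in>UNIV. scaleC_mat (ctrans A $ b $ a) (mat_unit b a))"
    by (subst sum.swap) simp
  also have "\<dots> = A"
    using assms by (simp add: sum_mat_units hermitian_def)
  finally have "(\<Sum>a\<in>UNIV. \<Sum>b\<in>UNIV. herm_pair a b (A $ a $ b)) = A + A"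
    by (simp add: herm_pair_def sum.distrib sum_mat_units)
  then show ?thesis
    by (simp add: scaleR_2[symmetric])
qed

lemma hermitian_in_span:
  assumes U: "unitary U" and "\<And>j k. j \<noteq> k \<Longrightarrow> linked U j k" and "hermitian A"
  shows "A \<in> span (conj_projections U)"
proof -
  have "herm_pair a b z \<in> span (conj_projections U)" for a b z
  proof (cases "a = b")
    case True
    then show ?thesis
      by (simp add: herm_pair_diag span_scale span_base mat_unit_in_conj_projections)
  next
    case False
    then show ?thesis using herm_pair_in_span_if_linked[OF U] assms(2) by blast
  qed
  then show ?thesis
    by (subst hermitian_eq_sum_herm_pairs[OF assms(3)]) (intro span_scale span_sum)
qed

subsection \<open>A neighbourhood of the identity\<close>

definition entry_norm :: "complex^'n^'m \<Rightarrow> real" where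
  "entry_norm A = (\<Sum>i\<in>UNIV. \<Sum>j\<in>UNIV. cmod (A $ i $ j))"

lemma entry_norm_nonneg: "0 \<le> entry_norm A"
  unfolding entry_norm_def by (intro sum_nonneg) auto

lemma entry_norm_triangle: "entry_norm (A + B) \<le> entry_norm A + entry_norm B"
  unfolding entry_norm_def sum.distrib[symmetric]
  by (intro sum_mono) (simp add: norm_triangle_ineq)

lemma entry_norm_uminus: "entry_norm (- A) = entry_norm A"
  by (simp add: entry_norm_def)

lemma entry_norm_ctrans: "entry_norm (ctrans A) = entry_norm A"
  unfolding entry_norm_def ctrans_nth complex_mod_cnj by (rule sum.swap)

lemma entry_norm_scaleR: "entry_norm (r *\<^sub>R A) = \<bar>r\<bar> * entry_norm A"
  by (simp add: entry_norm_def sum_distrib_left)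

lemma entry_norm_eq_0_iff: "entry_norm A = 0 \<longleftrightarrow> A = 0"
  unfolding entry_norm_def
  by (simp add: sum_nonneg_eq_0_iff sum_nonneg vec_eq_iff)

lemma entry_norm_mult: "entry_norm ((A :: complex^'n^'m) ** (B :: complex^'k^'n)) \<le> entry_norm A * entry_norm B"
proof -
  have row: "(\<Sum>j\<in>UNIV. cmod (B $ k $ j)) \<le> entry_norm B" for k
    unfolding entry_norm_def by (rule member_le_sum) (auto intro: sum_nonneg)
  have "entry_norm (A ** B) \<le> (\<Sum>i\<in>UNIV. \<Sum>j\<in>UNIV. \<Sum>k\<in>UNIV. cmod (A $ i $ k) * cmod (B $ k $ j))"
    unfolding entry_norm_def matrix_mult_nth
    by (intro sum_mono) (rule order_trans[OF norm_sum], simp add: norm_mult)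
  also have "\<dots> = (\<Sum>i\<in>UNIV. \<Sum>k\<in>UNIV. cmod (A $ i $ k) * (\<Sum>j\<in>UNIV. cmod (B $ k $ j)))"
    by (subst sum.swap) (simp add: sum_distrib_left)
  also have "\<dots> \<le> (\<Sum>i\<in>UNIV. \<Sum>k\<in>UNIV. cmod (A $ i $ k) * entry_norm B)"
    by (intro sum_mono mult_left_mono row) auto
  also have "\<dots> = entry_norm A * entry_norm B"
    unfolding entry_norm_def by (simp add: sum_distrib_right)
  finally show ?thesis .
qed

lemma entry_norm_le_norm: "entry_norm (A :: complex^'n^'m) \<le> real (CARD('m) * CARD('n)) * norm A"
proof -
  have "cmod (A $ i $ j) \<le> norm A" for i j
    using Finite_Cartesian_Product.norm_nth_le[of "A $ i" j]
      Finite_Cartesian_Product.norm_nth_le[of A i] by linarith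
  then have "entry_norm A \<le> (\<Sum>i\<in>(UNIV::'m set). real CARD('n) * norm A)"
    unfolding entry_norm_def by (intro sum_mono) (rule order_trans[OF sum_bounded_above], auto)
  then show ?thesis by simp
qed

text \<open>Expanding \<open>(W + K)\<^sup>\<dagger>(W + K) = 1\<close> gives \<open>2K = -(E\<^sup>\<dagger>K + KE + K\<^sup>2)\<close> with \<open>E = W - 1\<close>, whose
  right-hand side is too small compared with \<open>K\<close> unless \<open>K = 0\<close>.\<close>

lemma hermitian_perturbation_of_unitary_eq_0:
  assumes W: "unitary W" and WK: "unitary (W + K)" and K: "hermitian K"
    and small_W: "entry_norm (W - mat 1) < 1/4" and small_K: "entry_norm K < 1/2"
  shows "K = 0"
proof -
  define E where "E = W - mat 1"
  have "ctrans W ** K + K ** W + K ** K = 0"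
    using unitaryD(1)[OF WK] unitaryD(1)[OF W] K
    by (simp add: hermitian_def ctrans_add matrix_add_ldistrib matrix_add_rdistrib algebra_simps)
  then have "K + K + (ctrans E ** K + K ** E + K ** K) = 0"
    unfolding E_def
    by (simp add: ctrans_diff matrix_diff_ldistrib matrix_diff_rdistrib algebra_simps)
  then have "2 *\<^sub>R K = - (ctrans E ** K + K ** E + K ** K)"
    by (simp only: scaleR_2 eq_neg_iff_add_eq_0)
  then have "2 * entry_norm K = entry_norm (ctrans E ** K + K ** E + K ** K)"
    by (metis entry_norm_scaleR entry_norm_uminus abs_numeral)
  also have "\<dots> \<le> entry_norm E * entry_norm K + entry_norm K * entry_norm E + entry_norm K * entry_norm K"
    by (intro order_trans[OF entry_norm_triangle] add_mono
        order_trans[OF entry_norm_mult] order_refl) (simp add: entry_norm_ctrans)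
  finally have "2 * entry_norm K \<le> (2 * entry_norm E + entry_norm K) * entry_norm K"
    by (simp add: algebra_simps)
  moreover have "2 * entry_norm E + entry_norm K < 2"
    using small_W small_K unfolding E_def by simp
  ultimately have "\<not> entry_norm K > 0"
    using mult_strict_right_mono[of "2 * entry_norm E + entry_norm K" 2 "entry_norm K"] by linarith
  then show ?thesis
    using entry_norm_nonneg[of K] by (simp add: entry_norm_eq_0_iff)
qed

definition phase_product :: "('i \<Rightarrow> complex^'n^'n) \<Rightarrow> 'i list \<Rightarrow> real^'i \<Rightarrow> complex^'n^'n" where
  "phase_product P ixs t = list_matprod (map (\<lambda>i. phase_mat (P i) (cis (t $ i))) ixs)"

definition hermitian_part :: "complex^'n^'n \<Rightarrow> complex^'n^'n" where
  "hermitian_part Z = (1/2) *\<^sub>R (Z + ctrans Z)"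

lemma phase_product_0: "phase_product P ixs 0 = mat 1"
  unfolding phase_product_def by (induction ixs) simp_all

lemma has_derivative_phase_mat_cis:
  "((\<lambda>t. phase_mat P (cis (t $ i))) has_derivative (\<lambda>h. scaleC_mat (\<i> * of_real (h $ i)) P))
     (at (0 :: real^'i))"
proof -
  have "((\<lambda>t. cis (t $ i) - 1) has_derivative (\<lambda>h. (h $ i) *\<^sub>R (\<i> * cis ((0 :: real^'i) $ i)) - 0))
      (at (0 :: real^'i))"
    by (intro has_derivative_diff has_derivative_cis has_derivative_const
        bounded_linear_imp_has_derivative bounded_linear_vec_nth)
  then have "((\<lambda>t. mat 1 + scaleC_mat (cis (t $ i) - 1) P) has_derivative
      (\<lambda>h. 0 + scaleC_mat ((h $ i) *\<^sub>R (\<i> * cis ((0 :: real^'i) $ i)) - 0) P)) (at (0 :: real^'i))"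
    by (intro has_derivative_add has_derivative_const
        bounded_linear.has_derivative[OF bounded_linear_scaleC_mat_left])
  then show ?thesis
    unfolding phase_mat_def
    by (rule has_derivative_eq_rhs) (simp add: scaleR_conv_of_real mult.commute)
qed

lemma has_derivative_phase_product:
  "(phase_product P ixs has_derivative (\<lambda>h. \<Sum>i\<leftarrow>ixs. scaleC_mat (\<i> * of_real (h $ i)) (P i)))
     (at 0)"
proof (induction ixs)
  case Nil
  then show ?case by (simp add: phase_product_def)
next
  case (Cons i ixs)
  have "phase_product P (i # ixs) = (\<lambda>t. phase_mat (P i) (cis (t $ i)) ** phase_product P ixs t)"
    by (simp add: phase_product_def fun_eq_iff)
  moreover have "((\<lambda>t. phase_mat (P i) (cis (t $ i)) ** phase_product P ixs t) has_derivative
      (\<lambda>h. phase_mat (P i) (cis (0 $ i)) ** (\<Sum>i\<leftarrow>ixs. scaleC_mat (\<i> * of_real (h $ i)) (P i))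
        + scaleC_mat (\<i> * of_real (h $ i)) (P i) ** phase_product P ixs 0)) (at 0)"
    by (rule bounded_bilinear.FDERIV[OF bounded_bilinear_matrix_mult
          has_derivative_phase_mat_cis Cons.IH])
  ultimately show ?case
    by (simp add: phase_product_0 add.commute)
qed

lemma continuous_on_phase_product: "continuous_on UNIV (phase_product P ixs)"
proof (induction ixs)
  case Nil
  then show ?case by (simp add: phase_product_def)
next
  case (Cons i ixs)
  have "continuous_on UNIV (\<lambda>t. phase_mat (P i) (cis (t $ i)))"
    unfolding phase_mat_def
    by (intro continuous_intros bounded_linear.continuous_on[OF bounded_linear_scaleC_mat_left])
  then show ?case
    using bounded_bilinear.continuous_on[OF bounded_bilinear_matrix_mult _ Cons.IH]
    by (simp add: phase_product_def)
qed

lemma generated_phase_product: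
  assumes "unitary U" "range P \<subseteq> conj_projections U"
  shows "generated U (phase_product P ixs t)"
  unfolding phase_product_def
  using assms
  by (auto simp: image_subset_iff intro!: generated_list_matprod generated_phase_mat_conj_projections)

lemma hermitian_hermitian_part: "hermitian (hermitian_part Z)"
  by (simp add: hermitian_def hermitian_part_def ctrans_add ctrans_scaleR add.commute)

lemma bounded_linear_hermitian_part: "bounded_linear hermitian_part"
  unfolding linear_conv_bounded_linear[symmetric] hermitian_part_def
  by (rule linearI) (simp_all add: ctrans_add ctrans_scaleR algebra_simps)

lemma has_derivative_phase_product_enum:
  assumes "distinct ixs" "set ixs = UNIV"
  shows "(phase_product P ixs has_derivative (\<lambda>h. scaleC_mat \<i> (\<Sum>i\<in>UNIV. h $ i *\<^sub>R P i))) (at 0)"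
proof (rule has_derivative_eq_rhs[OF has_derivative_phase_product])
  show "(\<lambda>h. \<Sum>i\<leftarrow>ixs. scaleC_mat (\<i> * of_real (h $ i)) (P i)) =
      (\<lambda>h. scaleC_mat \<i> (\<Sum>i\<in>UNIV. h $ i *\<^sub>R P i))"
    using assms by (simp add: fun_eq_iff sum_list_distinct_conv_sum_set scaleC_mat_sum
        scaleC_mat_scaleC_mat flip: scaleC_mat_of_real)
qed

lemma exists_hermitian_imaginary_part: "\<exists>A. hermitian A \<and> Z = scaleC_mat \<i> A + hermitian_part Z"
proof (intro exI conjI)
  show "hermitian (scaleC_mat (- \<i> / 2) (Z - ctrans Z))"
    by (auto simp: hermitian_def vec_eq_iff algebra_simps)
  show "Z = scaleC_mat \<i> (scaleC_mat (- \<i> / 2) (Z - ctrans Z)) + hermitian_part Z"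
    by (simp add: hermitian_part_def vec_eq_iff scaleR_conv_of_real[where 'a = complex] field_simps)
qed

text \<open>The phase products only move inside the unitary group, so they cannot cover a
  neighbourhood of \<open>1\<close> in the space of all matrices; adding a Hermitian summand
  makes the derivative at \<open>0\<close> surjective, since every matrix is \<open>\<i>A + B\<close> with \<open>A\<close>, \<open>B\<close> Hermitian.\<close>

lemma mat_1_in_interior_phase_product_image:
  fixes P :: "'i::finite \<Rightarrow> complex^'n^'n"
  assumes ixs: "distinct ixs" "set ixs = UNIV"
    and herm: "\<And>A. hermitian A \<Longrightarrow> A \<in> span (range P)" and "\<delta> > 0"
  shows "mat 1 \<in> interior ((\<lambda>p. phase_product P ixs (fst p) + hermitian_part (snd p)) ` ball 0 \<delta>)"
proof -
  let ?F = "\<lambda>p. phase_product P ixs (fst p) + hermitian_part (snd p)"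
  define D where "D = (\<lambda>q :: (real^'i) \<times> (complex^'n^'n).
    scaleC_mat \<i> (\<Sum>i\<in>UNIV. fst q $ i *\<^sub>R P i) + hermitian_part (snd q))"
  have herm_snd: "bounded_linear (\<lambda>p :: (real^'i) \<times> (complex^'n^'n). hermitian_part (snd p))"
    by (rule bounded_linear_compose[OF bounded_linear_hermitian_part bounded_linear_snd])
  have "(fst has_derivative fst) (at (0 :: (real^'i) \<times> (complex^'n^'n)))"
    by (rule bounded_linear_imp_has_derivative[OF bounded_linear_fst])
  then have deriv: "(?F has_derivative D) (at 0)"
    using has_derivative_compose[of fst fst 0 UNIV "phase_product P ixs"]
      has_derivative_phase_product_enum[OF ixs, of P]
    unfolding D_def by (intro has_derivative_add bounded_linear_imp_has_derivative herm_snd) simp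
  have "Z \<in> range D" for Z
  proof -
    obtain A where "hermitian A" and Z: "Z = scaleC_mat \<i> A + hermitian_part Z"
      using exists_hermitian_imaginary_part by blast
    then obtain h where "A = (\<Sum>i\<in>UNIV. h $ i *\<^sub>R P i)"
      using herm unfolding span_range_eq_sums by blast
    then have "D (h, Z) = Z"
      using Z by (simp add: D_def)
    then show ?thesis
      by (metis rangeI)
  qed
  then obtain g where g: "linear g" "D \<circ> g = id"
    using has_derivative_linear[OF deriv] linear_surjective_right_inverse by blast
  have "continuous_on UNIV ?F"
    using herm_snd by (intro continuous_on_add linear_continuous_on
        continuous_on_compose2[OF continuous_on_phase_product continuous_on_fst]) auto
  then have "?F 0 \<in> interior (?F ` ball 0 \<delta>)"
    using g(1) \<open>\<delta> > 0\<close>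
    by (intro sussmann_open_mapping[OF open_UNIV _ UNIV_I deriv _ g(2)])
      (auto simp: linear_conv_bounded_linear)
  then show ?thesis
    by (simp add: phase_product_0 hermitian_part_def)
qed

lemma hermitian_perturbation_of_unitary_near_1_eq_0:
  fixes W :: "complex^'n^'n"
  assumes "unitary W" "unitary (W + K)" "hermitian K"
    and W: "norm (W - mat 1) < r" and WK: "norm (W + K - mat 1) < r"
    and r: "8 * real (CARD('n) * CARD('n)) * r \<le> 1"
  shows "K = 0"
proof (rule hermitian_perturbation_of_unitary_eq_0[OF assms(1-3)])
  define N where "N = real (CARD('n) * CARD('n))"
  have N: "N > 0" "8 * N * r \<le> 1"
    using r by (simp_all add: N_def)
  have "entry_norm (W - mat 1) \<le> N * norm (W - mat 1)"
    using entry_norm_le_norm[of "W - mat 1"] by (simp add: N_def)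
  also have "\<dots> < N * r"
    using W N by simp
  finally show "entry_norm (W - mat 1) < 1/4"
    using N by simp
  have "norm K \<le> norm (W + K - mat 1) + norm (W - mat 1)"
    using norm_triangle_ineq4[of "W + K - mat 1" "W - mat 1"] by simp
  then have "entry_norm K \<le> N * (norm (W + K - mat 1) + norm (W - mat 1))"
    using entry_norm_le_norm[of K] N by (simp add: N_def)
      (meson mult_left_mono of_nat_0_le_iff order_trans zero_le_mult_iff)
  also have "\<dots> < N * (2 * r)"
    using W WK N by simp
  finally show "entry_norm K < 1/2"
    using N by simp
qed

definition generates_nhd_mat_1 :: "complex^'d^'d \<Rightarrow> bool" where
  "generates_nhd_mat_1 U \<longleftrightarrow> (\<exists>\<epsilon>>0. \<forall>V. unitary V \<longrightarrow> norm (V - mat 1) < \<epsilon> \<longrightarrow> generated U V)"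

lemma generates_nhd_mat_1_if_spanning_family:
  fixes P :: "'i::finite \<Rightarrow> complex^'d^'d"
  assumes U: "unitary U" and P: "range P \<subseteq> conj_projections U"
    and herm: "\<And>A. hermitian A \<Longrightarrow> A \<in> span (range P)"
  shows "generates_nhd_mat_1 U"
proof -
  obtain ixs :: "'i list" where ixs: "distinct ixs" "set ixs = UNIV"
    using finite_distinct_list[OF finite] by blast
  define r where "r = 1 / (8 * real (CARD('d) * CARD('d)))"
  have r: "r > 0" "8 * real (CARD('d) * CARD('d)) * r \<le> 1"
    by (simp_all add: r_def)
  obtain \<delta> where "\<delta> > 0" and \<delta>: "\<And>t. dist t 0 < \<delta> \<Longrightarrow> dist (phase_product P ixs t) (mat 1) < r"
    using continuous_on_phase_product[of P ixs] r(1) unfolding continuous_on_iff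
    by (metis UNIV_I phase_product_0)
  let ?F = "\<lambda>p. phase_product P ixs (fst p) + hermitian_part (snd p)"
  obtain \<epsilon> where "\<epsilon> > 0" and \<epsilon>: "ball (mat 1) \<epsilon> \<subseteq> ?F ` ball 0 \<delta>"
    using mat_1_in_interior_phase_product_image[OF ixs herm \<open>\<delta> > 0\<close>] unfolding mem_interior
    by blast
  have "generated U V" if V: "unitary V" "norm (V - mat 1) < min \<epsilon> r" for V
  proof -
    obtain p where p: "p \<in> ball 0 \<delta>" and V_eq: "V = ?F p"
      using \<epsilon> V(2) by (force simp: dist_norm norm_minus_commute)
    define W where "W = phase_product P ixs (fst p)"
    have "norm (fst p) < \<delta>"
      using p norm_fst_le[of "fst p" "snd p"] by (simp add: dist_norm)
    then have W_near: "norm (W - mat 1) < r"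
      using \<delta>[of "fst p"] by (simp add: W_def dist_norm)
    have W: "generated U W"
      unfolding W_def using generated_phase_product[OF U P] .
    have "hermitian_part (snd p) = 0"
      using V V_eq generated_unitary[OF U W] hermitian_hermitian_part r(2) W_near
      by (intro hermitian_perturbation_of_unitary_near_1_eq_0[of W]) (auto simp: W_def)
    then show ?thesis
      using W V_eq by (simp add: W_def)
  qed
  then show ?thesis
    using \<open>\<epsilon> > 0\<close> r(1) unfolding generates_nhd_mat_1_def
    by (intro exI[of _ "min \<epsilon> r"]) auto
qed

lemma generates_nhd_mat_1:
  fixes U :: "complex^'d^'d"
  assumes U: "unitary U" and herm: "\<And>A. hermitian A \<Longrightarrow> A \<in> span (conj_projections U)"
  shows "generates_nhd_mat_1 U"
proof -
  have "DIM(complex^'d^'d) \<le> CARD(('d \<times> 'd) \<times> bool)"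
    by (simp add: DIM_cart card_UNIV_bool)
  then obtain P :: "('d \<times> 'd) \<times> bool \<Rightarrow> complex^'d^'d"
    where P: "range P \<subseteq> conj_projections U" "conj_projections U \<subseteq> span (range P)"
    using exists_spanning_family[of "conj_projections U"] mat_unit_in_conj_projections by blast
  have "A \<in> span (range P)" if "hermitian A" for A
    using herm[OF that] span_minimal[OF P(2) subspace_span] by blast
  then show ?thesis
    by (rule generates_nhd_mat_1_if_spanning_family[OF U P(1)])
qed

subsection \<open>Householder reduction\<close>

definition cinner :: "complex^'n \<Rightarrow> complex^'n \<Rightarrow> complex" where
  "cinner x y = (\<Sum>a\<in>UNIV. cnj (x $ a) * y $ a)"

definition proj_line :: "complex^'n \<Rightarrow> complex^'n^'n" where
  "proj_line y = (\<chi> a b. y $ a * cnj (y $ b) / cinner y y)"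

lemma cnj_cinner: "cnj (cinner x y) = cinner y x"
  by (simp add: cinner_def mult.commute)

lemma cinner_self_eq_0_iff: "cinner x x = 0 \<longleftrightarrow> x = 0"
proof -
  have "cinner x x = of_real (\<Sum>a\<in>UNIV. (cmod (x $ a))\<^sup>2)"
    unfolding cinner_def of_real_sum
    by (intro sum.cong refl) (metis complex_norm_square mult.commute of_real_power)
  moreover have "(\<Sum>a\<in>UNIV. (cmod (x $ a))\<^sup>2) = 0 \<longleftrightarrow> (\<forall>a. x $ a = 0)"
    by (simp add: sum_nonneg_eq_0_iff)
  ultimately show ?thesis
    by (simp only: of_real_eq_0_iff vec_eq_iff zero_index)
qed

lemma cinner_diff_left: "cinner (x - y) w = cinner x w - cinner y w"
  by (simp add: cinner_def algebra_simps sum_subtractf)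

lemma cinner_diff_right: "cinner w (x - y) = cinner w x - cinner w y"
  by (simp add: cinner_def algebra_simps sum_subtractf)

lemma cinner_smult_left: "cinner (c *s x) w = cnj c * cinner x w"
  by (simp add: cinner_def sum_distrib_left mult.assoc)

lemma cinner_smult_right: "cinner w (c *s x) = c * cinner w x"
  by (simp add: cinner_def sum_distrib_left algebra_simps)

lemma cinner_axis_left: "cinner (axis j 1) w = w $ j"
  by (simp add: cinner_def axis_def if_distrib if_distribR cong: if_cong)

lemma cinner_axis_right: "cinner w (axis j 1) = cnj (w $ j)"
  by (metis cinner_axis_left cnj_cinner)

lemma cinner_columns: "cinner (column i V) (column j V) = (ctrans V ** V) $ i $ j"
  by (simp add: cinner_def column_def matrix_mult_nth)

lemma hermitian_proj_line: "hermitian (proj_line y)"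
  by (simp add: hermitian_def proj_line_def vec_eq_iff cnj_cinner mult.commute)

lemma proj_line_idem:
  assumes "y \<noteq> 0"
  shows "proj_line y ** proj_line y = proj_line y"
proof (unfold vec_eq_iff, intro allI)
  fix a b
  have "(proj_line y ** proj_line y) $ a $ b =
      (\<Sum>c\<in>UNIV. (y $ a * cnj (y $ b) / (cinner y y * cinner y y)) * (cnj (y $ c) * y $ c))"
    unfolding matrix_mult_nth proj_line_def by (intro sum.cong refl) (simp add: field_simps)
  also have "\<dots> = (y $ a * cnj (y $ b) / (cinner y y * cinner y y)) * cinner y y"
    by (simp add: cinner_def sum_distrib_left)
  also have "\<dots> = proj_line y $ a $ b"
    using assms by (simp add: proj_line_def cinner_self_eq_0_iff)
  finally show "(proj_line y ** proj_line y) $ a $ b = proj_line y $ a $ b" .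
qed

lemma phase_mat_proj_line_mult_vec:
  "phase_mat (proj_line y) z *v x = x + ((z - 1) * cinner y x / cinner y y) *s y"
  by (simp add: vec_eq_iff phase_mat_def matrix_vector_mult_add_rdistrib matrix_vector_mult_nth
      proj_line_def cinner_def sum_distrib_left sum_divide_distrib field_simps)

lemma householder_reflection:
  assumes y: "y = x - v" "y \<noteq> 0"
    and xv: "cinner v v = cinner x x" "cinner x v = cinner v x"
  shows "phase_mat (proj_line y) (-1) *v x = v"
proof -
  have "cinner y y = 2 * cinner y x"
    using xv unfolding y(1) cinner_diff_left cinner_diff_right by simp
  moreover have "cinner y y \<noteq> 0"
    using y(2) by (simp add: cinner_self_eq_0_iff)
  ultimately have "(-1 - 1) * cinner y x / cinner y y = -1"
    by simp
  then show ?thesis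
    unfolding phase_mat_proj_line_mult_vec using y(1) by simp
qed

lemma phase_mat_proj_line_orthogonal:
  "cinner y w = 0 \<Longrightarrow> phase_mat (proj_line y) z *v w = w"
  by (simp add: phase_mat_proj_line_mult_vec)

text \<open>A phase matrix is the \<open>n\<close>-th power of a phase matrix with an \<open>n\<close>-th root of its phase,
  which lies arbitrarily close to \<open>1\<close>.\<close>

lemma generated_phase_mat_if_generates_nhd_mat_1:
  assumes near: "generates_nhd_mat_1 U"
    and P: "hermitian P" "P ** P = P" and z: "cmod z = 1"
  shows "generated U (phase_mat P z)"
proof -
  obtain \<epsilon> where "\<epsilon> > 0" and \<epsilon>: "\<And>V. unitary V \<Longrightarrow> norm (V - mat 1) < \<epsilon> \<Longrightarrow> generated U V"
    using near unfolding generates_nhd_mat_1_def by blast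
  have "continuous_on UNIV (\<lambda>\<theta>. phase_mat P (cis \<theta>))"
    unfolding phase_mat_def
    by (intro continuous_intros bounded_linear.continuous_on[OF bounded_linear_scaleC_mat_left])
  then obtain d where "d > 0" and d: "\<And>\<theta>. \<bar>\<theta>\<bar> < d \<Longrightarrow> norm (phase_mat P (cis \<theta>) - mat 1) < \<epsilon>"
    using \<open>\<epsilon> > 0\<close> unfolding continuous_on_iff
    by (metis UNIV_I cis_zero diff_zero dist_norm phase_mat_1 real_norm_def)
  obtain n :: nat where n: "\<bar>Arg z\<bar> / d < real n"
    using reals_Archimedean2 by blast
  moreover have "0 \<le> \<bar>Arg z\<bar> / d"
    using \<open>d > 0\<close> by simp
  ultimately have "n > 0"
    by (cases n) auto
  define w where "w = cis (Arg z / real n)"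
  have "\<bar>Arg z / real n\<bar> < d"
    using n \<open>n > 0\<close> \<open>d > 0\<close> by (simp add: field_simps abs_divide)
  then have "generated U (phase_mat P w)"
    using P unfolding w_def by (intro \<epsilon> d unitary_phase_mat) auto
  then have "generated U (list_matprod (replicate n (phase_mat P w)))"
    by (intro generated_list_matprod) auto
  moreover have "w ^ n = cis (Arg z)"
    using Complex.DeMoivre[of "Arg z / real n" n] \<open>n > 0\<close> by (simp add: w_def)
  moreover have "cis (Arg z) = z"
    using z cis_Arg[of z] by (metis norm_zero sgn_eq zero_neq_one div_by_1 of_real_1)
  ultimately show ?thesis
    by (simp add: list_matprod_replicate_phase_mat P(2))
qed

lemma generated_reflection:
  assumes near: "generates_nhd_mat_1 U"
    and xv: "cinner v v = cinner x x" "cinner x v = cinner v x"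
  shows "\<exists>H. generated U H \<and> H *v x = v \<and> (\<forall>w. cinner (x - v) w = 0 \<longrightarrow> H *v w = w)"
proof (cases "x = v")
  case True
  then show ?thesis
    by (intro exI[of _ "mat 1"]) (simp add: generated_mat_1)
next
  case False
  then have "x - v \<noteq> 0" by simp
  then show ?thesis
    using generated_phase_mat_if_generates_nhd_mat_1[OF near hermitian_proj_line proj_line_idem]
      householder_reflection[OF refl _ xv] phase_mat_proj_line_orthogonal
    by (intro exI[of _ "phase_mat (proj_line (x - v)) (-1)"]) auto
qed

definition fixes_axis :: "complex^'n^'n \<Rightarrow> 'n \<Rightarrow> bool" where
  "fixes_axis V i \<longleftrightarrow> column i V = axis i 1"

lemma column_matrix_mult: "column i (A ** B) = A *v column i B"
  by (simp add: vec_eq_iff column_def matrix_mult_nth matrix_vector_mult_nth)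

lemma diag_mat_mult_vec: "(diag_mat f *v w) $ a = f a * w $ a"
  by (simp add: matrix_vector_mult_nth diag_mat_def if_distrib if_distribR cong: if_cong)

lemma phase_mat_mat_unit_mult_vec:
  "(phase_mat (mat_unit j j) c *v w) $ a = (if a = j then c * w $ a else w $ a)"
  by (simp add: phase_mat_mat_unit diag_mat_mult_vec)

lemma generated_to_axis:
  assumes near: "generates_nhd_mat_1 U"
    and x: "cinner x x = 1"
  shows "\<exists>R. generated U R \<and> R *v x = axis j 1 \<and>
    (\<forall>i. i \<noteq> j \<and> x $ i = 0 \<longrightarrow> R *v axis i 1 = axis i 1)"
proof -
  obtain \<mu> where \<mu>: "cmod \<mu> = 1" "cnj \<mu> * x $ j = of_real (cmod (x $ j))"
    using exists_unit_phase by blast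
  define v where "v = \<mu> *s axis j 1"
  have "cinner v x = of_real (cmod (x $ j))"
    using \<mu>(2) by (simp add: v_def cinner_smult_left cinner_axis_left)
  then have "cinner x v = cinner v x"
    by (metis cnj_cinner complex_cnj_complex_of_real)
  moreover have "cinner v v = cinner x x"
    using x cnj_mult_self_unit[OF \<mu>(1)]
    by (simp add: v_def cinner_smult_left cinner_smult_right cinner_axis_left mult.commute)
  ultimately obtain H where H: "generated U H" "H *v x = v"
    "\<And>w. cinner (x - v) w = 0 \<Longrightarrow> H *v w = w"
    using generated_reflection[OF near] by blast
  define R where "R = phase_mat (mat_unit j j) (cnj \<mu>) ** H"
  have "generated U R"
    unfolding R_def using \<mu>(1) by (intro generated_mult generated_phase_mat_unit H(1)) simp
  moreover have "R *v x = axis j 1"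
    using \<mu>(1) H(2)
    by (simp add: R_def vec_eq_iff v_def matrix_vector_mul_assoc[symmetric]
        phase_mat_mat_unit_mult_vec axis_def cnj_mult_self_unit)
  moreover have "R *v axis i 1 = axis i 1" if i: "i \<noteq> j" "x $ i = 0" for i
  proof -
    have "cinner (x - v) (axis i 1) = 0"
      using i by (simp add: cinner_axis_right v_def) (simp add: axis_def)
    then have "H *v axis i 1 = axis i 1"
      by (rule H(3))
    moreover have "phase_mat (mat_unit j j) (cnj \<mu>) *v axis i 1 = axis i 1"
      using i by (auto simp: vec_eq_iff phase_mat_mat_unit_mult_vec axis_def)
    ultimately show ?thesis
      by (simp add: R_def matrix_vector_mul_assoc[symmetric])
  qed
  ultimately show ?thesis
    by blast
qed

lemma generated_fix_column:
  assumes near: "generates_nhd_mat_1 U"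
    and V: "unitary V" and j: "\<not> fixes_axis V j"
  shows "\<exists>R. generated U R \<and> fixes_axis (R ** V) j \<and> (\<forall>i. fixes_axis V i \<longrightarrow> fixes_axis (R ** V) i)"
proof -
  have orth: "cinner (column i V) (column k V) = (if i = k then 1 else 0)" for i k
    using cinner_columns[of i V k] unitaryD(1)[OF V] by (simp add: mat_nth)
  obtain R where R: "generated U R" "R *v column j V = axis j 1"
    "\<And>i. i \<noteq> j \<Longrightarrow> column j V $ i = 0 \<Longrightarrow> R *v axis i 1 = axis i 1"
    using generated_to_axis[OF near, of "column j V" j] orth[of j j] by auto
  have "fixes_axis (R ** V) i" if "fixes_axis V i" for i
  proof -
    have "i \<noteq> j" "column j V $ i = 0"
      using that j orth[of i j] unfolding fixes_axis_def by (auto simp: cinner_axis_left)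
    then show ?thesis
      using that R(3) unfolding fixes_axis_def column_matrix_mult by simp
  qed
  then show ?thesis
    using R(1,2) unfolding fixes_axis_def column_matrix_mult by blast
qed

lemma generated_if_generates_nhd_mat_1:
  assumes U: "unitary U"
    and near: "generates_nhd_mat_1 U"
  shows "unitary V \<Longrightarrow> generated U V"
proof (induction "card {i. \<not> fixes_axis V i}" arbitrary: V rule: less_induct)
  case less
  show ?case
  proof (cases "\<forall>i. fixes_axis V i")
    case True
    then have "V = mat 1"
      by (simp add: fixes_axis_def vec_eq_iff column_def axis_def mat_nth)
    then show ?thesis
      by (simp add: generated_mat_1)
  next
    case False
    then obtain j R where j: "\<not> fixes_axis V j" and R: "generated U R" "fixes_axis (R ** V) j"
      "\<And>i. fixes_axis V i \<Longrightarrow> fixes_axis (R ** V) i"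
      using generated_fix_column[OF near less.prems] by blast
    have "card {i. \<not> fixes_axis (R ** V) i} < card {i. \<not> fixes_axis V i}"
      using R(2,3) j by (intro psubset_card_mono) auto
    moreover have "unitary (R ** V)"
      using generated_unitary[OF U R(1)] less.prems by (rule unitary_mult)
    ultimately have "generated U (R ** V)"
      by (rule less.hyps)
    moreover have "V = ctrans R ** (R ** V)"
      using unitaryD(1)[OF generated_unitary[OF U R(1)]] by (simp add: matrix_mul_assoc)
    ultimately show ?thesis
      by (metis generated_ctrans[OF R(1)] generated_mult)
  qed
qed

theorem theorem10:
  fixes U :: "complex ^'d ^'d"
  assumes "CARD('d) \<ge> 2"
    and "unitary U"
    and "\<exists>M::nat. \<forall>i j. matpow (transpose (pattern U) ** pattern U) M $ i $ j \<noteq> 0"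
  shows "\<forall>V :: complex ^'d ^'d. unitary V \<longrightarrow>
           (\<exists>Ms. (\<forall>X\<in>set Ms. diag_unitary X \<or> (\<exists>D. diag_unitary D \<and> X = ctrans U ** D ** U))
                 \<and> V = list_matprod Ms)"
proof (intro allI impI)
  fix V :: "complex ^'d ^'d"
  assume V: "unitary V"
  obtain M where M: "\<And>i j. matpow (transpose (pattern U) ** pattern U) M $ i $ j \<noteq> 0"
    using assms(3) by blast
  have "linked U j k" if "j \<noteq> k" for j k
    using linked_if_matpow_nonzero[OF assms(2) M] that by blast
  then have "generates_nhd_mat_1 U"
    by (intro generates_nhd_mat_1[OF assms(2)] hermitian_in_span[OF assms(2)])
  then have "generated U V"
    using generated_if_generates_nhd_mat_1[OF assms(2) _ V] by blast
  then show "\<exists>Ms. (\<forall>X\<in>set Ms. diag_unitary X \<or> (\<exists>D. diag_unitary D \<and> X = ctrans U ** D ** U))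
                 \<and> V = list_matprod Ms"
    unfolding generated_def generator_def .
qed

end
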